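(* Let $\mathcal A$ be a $p$-S-ring over a finite $p$-group $H$, let $K\le H$ be an $\mathcal A$-subgroup of index $p$, and let $T\in\mathrm{Bs}(\mathcal A)$. Then: (i) $T$ is contained in a single coset of $K$; in particular $\mathrm{rad}(T)\le K$. (ii) If $L\le H$ is an $\mathcal A$-subgroup of order $p$ with $L\trianglelefteq H$ and $L\not\le\mathrm{rad}(T)$, then $hL\cap T=Lh\cap T=\{h\}$ for every $h\in T$. (iii) If $H$ is abelian and $|O(\mathcal A)\cap K|\cdot|T|>|H|/p$, then $O(\mathcal A)\cap\mathrm{rad}(T)\ne\{1\}$.
   Context: An S-ring over $H$ is a subalgebra $\mathcal A\subseteq\mathbb{Q}H$ spanned by $\underline{T}=\sum_{t\in T}t$ for $T$ in a partition $\mathrm{Bs}(\mathcal A)$ of $H$ (basic sets) with $\{1\}\in\mathrm{Bs}(\mathcal A)$ and $T^{-1}\in\mathrm{Bs}(\mathcal A)$ for all $T$. A subgroup $K$ is an $\mathcal A$-subgroup if $\underline K\in\mathcal A$. $\mathrm{rad}(S)=\{h\in H:hS=Sh=S\}$. The thin radical is $O(\mathcal A)=\{h\in H:\{h\}\in\mathrm{Bs}(\mathcal A)\}$. $\mathcal A$ is a $p$-S-ring if $H$ is a $p$-group and every basic set has $p$-power size. *)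

theory Defs
  imports "HOL-Algebra.Algebra"
begin

text \<open>Elements of the group algebra QH are modelled as functions from the group
  elements to rat, vanishing outside the carrier.  The basic sets are given by
  the partition S; the S-ring is the rational span of the characteristic
  functions of the basic sets.\<close>

definition ind :: "'a set \<Rightarrow> 'a \<Rightarrow> rat" where
  "ind T x = (if x \<in> T then 1 else 0)"

definition conv :: "('a, 'b) monoid_scheme \<Rightarrow> ('a \<Rightarrow> rat) \<Rightarrow> ('a \<Rightarrow> rat) \<Rightarrow> 'a \<Rightarrow> rat" where
  "conv H f g = (\<lambda>x. if x \<in> carrier H
      then (\<Sum>y\<in>carrier H. f y * g (inv\<^bsub>H\<^esub> y \<otimes>\<^bsub>H\<^esub> x)) else 0)"

definition in_span :: "'a set set \<Rightarrow> ('a \<Rightarrow> rat) \<Rightarrow> bool" where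
  "in_span S f \<longleftrightarrow> (\<exists>c :: 'a set \<Rightarrow> rat. f = (\<lambda>x. \<Sum>T\<in>S. c T * ind T x))"

definition S_ring :: "('a, 'b) monoid_scheme \<Rightarrow> 'a set set \<Rightarrow> bool" where
  "S_ring H S \<longleftrightarrow>
     group H \<and> finite (carrier H) \<and>
     (\<forall>T\<in>S. T \<noteq> {} \<and> T \<subseteq> carrier H) \<and>
     \<Union>S = carrier H \<and>
     (\<forall>T1\<in>S. \<forall>T2\<in>S. T1 \<noteq> T2 \<longrightarrow> T1 \<inter> T2 = {}) \<and>
     {\<one>\<^bsub>H\<^esub>} \<in> S \<and>
     (\<forall>T\<in>S. (\<lambda>x. inv\<^bsub>H\<^esub> x) ` T \<in> S) \<and>
     (\<forall>T1\<in>S. \<forall>T2\<in>S. in_span S (conv H (ind T1) (ind T2)))"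

definition A_subgroup :: "('a, 'b) monoid_scheme \<Rightarrow> 'a set set \<Rightarrow> 'a set \<Rightarrow> bool" where
  "A_subgroup H S K \<longleftrightarrow> subgroup K H \<and> in_span S (ind K)"

definition rad :: "('a, 'b) monoid_scheme \<Rightarrow> 'a set \<Rightarrow> 'a set" where
  "rad H T = {h \<in> carrier H. h <#\<^bsub>H\<^esub> T = T \<and> T #>\<^bsub>H\<^esub> h = T}"

definition thin_radical :: "('a, 'b) monoid_scheme \<Rightarrow> 'a set set \<Rightarrow> 'a set" where
  "thin_radical H S = {h \<in> carrier H. {h} \<in> S}"

definition p_S_ring :: "('a, 'b) monoid_scheme \<Rightarrow> 'a set set \<Rightarrow> nat \<Rightarrow> bool" where
  "p_S_ring H S p \<longleftrightarrow> S_ring H S \<and> Factorial_Ring.prime p \<and>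
     (\<exists>n. card (carrier H) = p ^ n) \<and> (\<forall>T\<in>S. \<exists>k. card T = p ^ k)"

end

theory Submission
  imports Defs
begin

text \<open>For an \<open>\<A>\<close>-subgroup K and a basic set T, the number \<open>|T \<inter> Kx|\<close> is the coefficient
  of x in the S-ring element \<open>K T\<close>, hence constant for \<open>x \<in> T\<close>; so \<open>|T|\<close> is this constant
  times the number of K-cosets meeting T.
  (i) If \<open>|H : K| = p\<close>, the number of cosets divides the p-power \<open>|T|\<close> and is at most p; it
  cannot be p, because a basic set meeting K lies inside K.
  (ii) If \<open>|L| = p\<close>, the constant is 1 or p, and p would make T a union of L-cosets,
  putting the normal subgroup L into \<open>rad(T)\<close>.
  (iii) Multiplication by a thin element a maps basic sets to basic sets. For
  \<open>a \<in> O(\<A>) \<inter> K\<close> the sets \<open>aT\<close> are pairwise distinct (a quotient of two such a would lie in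
  \<open>O(\<A>) \<inter> rad(T)\<close>), hence disjoint, and they all lie in the K-coset containing T, so
  \<open>|O(\<A>) \<inter> K| |T| \<le> |K| = |H|/p\<close>.\<close>

lemma in_span_eq_on_basic_set:
  assumes "S_ring H S" "in_span S f" "T \<in> S" "x \<in> T" "y \<in> T"
  shows "f x = f y"
proof -
  obtain c where c: "f = (\<lambda>x. \<Sum>U\<in>S. c U * ind U x)"
    using assms(2) unfolding in_span_def by blast
  have "ind U x = ind U y" if "U \<in> S" for U
  proof (cases "U = T")
    case False
    then have "U \<inter> T = {}"
      using assms(1,3) \<open>U \<in> S\<close> unfolding S_ring_def by blast
    then show ?thesis
      using assms(4,5) by (auto simp: ind_def)
  qed (use assms(4,5) in \<open>simp add: ind_def\<close>)
  then show ?thesis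
    unfolding c by (auto intro: sum.cong)
qed

lemma in_span_ind_basic_set_subset:
  assumes "S_ring H S" "in_span S (ind A)" "U \<in> S" "U \<inter> A \<noteq> {}"
  shows "U \<subseteq> A"
proof
  fix y assume "y \<in> U"
  obtain x where "x \<in> U" "x \<in> A"
    using assms(4) by blast
  then show "y \<in> A"
    using in_span_eq_on_basic_set[OF assms(1-3) \<open>x \<in> U\<close> \<open>y \<in> U\<close>]
    by (simp add: ind_def split: if_splits)
qed

lemma in_span_sum:
  assumes "\<And>i. i \<in> I \<Longrightarrow> in_span S (f i)"
  shows "in_span S (\<lambda>x. \<Sum>i\<in>I. c i * f i x)"
proof -
  obtain d where d: "\<And>i. i \<in> I \<Longrightarrow> f i = (\<lambda>x. \<Sum>T\<in>S. d i T * ind T x)"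
    using assms unfolding in_span_def by metis
  have "(\<lambda>x. \<Sum>i\<in>I. c i * f i x) = (\<lambda>x. \<Sum>T\<in>S. (\<Sum>i\<in>I. c i * d i T) * ind T x)"
    using d by (auto simp: sum_distrib_left sum_distrib_right mult.assoc
                     intro: sum.swap intro!: sum.cong)
  then show ?thesis
    unfolding in_span_def by (rule exI [where x = "\<lambda>T. \<Sum>i\<in>I. c i * d i T"])
qed

lemma conv_sum_left:
  "conv H (\<lambda>x. \<Sum>i\<in>I. c i * f i x) g = (\<lambda>x. \<Sum>i\<in>I. c i * conv H (f i) g x)"
proof
  fix x
  have "(\<Sum>y\<in>carrier H. (\<Sum>i\<in>I. c i * f i y) * g (inv\<^bsub>H\<^esub> y \<otimes>\<^bsub>H\<^esub> x))
      = (\<Sum>i\<in>I. c i * (\<Sum>y\<in>carrier H. f i y * g (inv\<^bsub>H\<^esub> y \<otimes>\<^bsub>H\<^esub> x)))"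
    by (simp add: sum_distrib_left sum_distrib_right mult.assoc sum.swap [of _ "carrier H"])
  then show "conv H (\<lambda>x. \<Sum>i\<in>I. c i * f i x) g x = (\<Sum>i\<in>I. c i * conv H (f i) g x)"
    by (simp add: conv_def)
qed

lemma in_span_conv_ind:
  assumes "S_ring H S" "in_span S f" "T \<in> S"
  shows "in_span S (conv H f (ind T))"
proof -
  obtain c where "f = (\<lambda>x. \<Sum>U\<in>S. c U * ind U x)"
    using assms(2) unfolding in_span_def by blast
  then have "conv H f (ind T) = (\<lambda>x. \<Sum>U\<in>S. c U * conv H (ind U) (ind T) x)"
    by (simp add: conv_sum_left)
  moreover have "in_span S (\<lambda>x. \<Sum>U\<in>S. c U * conv H (ind U) (ind T) x)"
    using assms(1,3)
    by (intro in_span_sum) (auto simp: S_ring_def)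
  ultimately show ?thesis
    by simp
qed

lemma conv_ind_ind:
  assumes "finite (carrier H)" "A \<subseteq> carrier H" "x \<in> carrier H"
  shows "conv H (ind A) (ind B) x = of_nat (card {y \<in> A. inv\<^bsub>H\<^esub> y \<otimes>\<^bsub>H\<^esub> x \<in> B})"
proof -
  have "conv H (ind A) (ind B) x = (\<Sum>y\<in>carrier H. if y \<in> A \<and> inv\<^bsub>H\<^esub> y \<otimes>\<^bsub>H\<^esub> x \<in> B then 1 else 0)"
    using assms(3) unfolding conv_def ind_def by (auto intro: sum.cong)
  also have "\<dots> = of_nat (card {y \<in> carrier H. y \<in> A \<and> inv\<^bsub>H\<^esub> y \<otimes>\<^bsub>H\<^esub> x \<in> B})"
    using assms(1) by (simp add: sum.If_cases Int_def)
  also have "{y \<in> carrier H. y \<in> A \<and> inv\<^bsub>H\<^esub> y \<otimes>\<^bsub>H\<^esub> x \<in> B} = {y \<in> A. inv\<^bsub>H\<^esub> y \<otimes>\<^bsub>H\<^esub> x \<in> B}"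
    using assms(2) by auto
  finally show ?thesis .
qed

lemma (in group) card_inv_mult_mem_eq_card_Int_rcos:
  assumes "subgroup K G" "x \<in> carrier G"
  shows "card {y \<in> K. inv y \<otimes> x \<in> T} = card (T \<inter> (K #> x))"
proof (rule bij_betw_same_card[of "\<lambda>y. inv y \<otimes> x"], rule bij_betwI')
  fix a b assume "a \<in> {y \<in> K. inv y \<otimes> x \<in> T}" "b \<in> {y \<in> K. inv y \<otimes> x \<in> T}"
  then have "a \<in> carrier G" "b \<in> carrier G"
    using subgroup.subset[OF assms(1)] by auto
  then show "(inv a \<otimes> x = inv b \<otimes> x) = (a = b)"
    using assms(2) by (metis inv_closed inv_inv r_cancel)
next
  fix a assume "a \<in> {y \<in> K. inv y \<otimes> x \<in> T}"
  then show "inv a \<otimes> x \<in> T \<inter> (K #> x)"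
    using subgroup.m_inv_closed[OF assms(1)] unfolding r_coset_def by auto
next
  fix z assume "z \<in> T \<inter> (K #> x)"
  then obtain k where "k \<in> K" "z = k \<otimes> x" "z \<in> T"
    unfolding r_coset_def by auto
  then show "\<exists>y \<in> {y \<in> K. inv y \<otimes> x \<in> T}. z = inv y \<otimes> x"
    using subgroup.m_inv_closed[OF assms(1)] subgroup.mem_carrier[OF assms(1)]
    by (metis (mono_tags, lifting) inv_inv mem_Collect_eq)
qed

lemma card_Int_rcos_eq_on_basic_set:
  assumes "S_ring H S" "A_subgroup H S K" "T \<in> S" "x \<in> T" "y \<in> T"
  shows "card (T \<inter> (K #>\<^bsub>H\<^esub> x)) = card (T \<inter> (K #>\<^bsub>H\<^esub> y))"
proof -
  have H: "group H" "finite (carrier H)" "T \<subseteq> carrier H"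
    using assms(1,3) unfolding S_ring_def by auto
  have K: "subgroup K H" "in_span S (ind K)"
    using assms(2) unfolding A_subgroup_def by auto
  have count: "conv H (ind K) (ind T) z = card (T \<inter> (K #>\<^bsub>H\<^esub> z))" if "z \<in> T" for z
    using that H K conv_ind_ind[OF H(2) subgroup.subset[OF K(1)]]
      group.card_inv_mult_mem_eq_card_Int_rcos[OF H(1) K(1)] by auto
  show ?thesis
    using in_span_eq_on_basic_set[OF assms(1) in_span_conv_ind[OF assms(1) K(2) assms(3)] assms(3-5)]
      count[OF assms(4)] count[OF assms(5)] by simp
qed

lemma card_basic_set_eq_mult_card_rcos_image:
  fixes H (structure)
  assumes "S_ring H S" "A_subgroup H S K" "T \<in> S" "t \<in> T"
  shows "card (T \<inter> (K #> t)) * card ((\<lambda>x. K #> x) ` T) = card T"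
proof -
  have H: "group H" "finite (carrier H)" "T \<subseteq> carrier H"
    using assms(1,3) unfolding S_ring_def by auto
  interpret group H by fact
  have K: "subgroup K H"
    using assms(2) unfolding A_subgroup_def by auto
  let ?D = "(\<lambda>x. K #> x) ` T"
  have "T = (\<Union>C\<in>?D. T \<inter> C)"
    using H(3) rcos_self[OF _ K] by blast
  also have "card \<dots> = (\<Sum>C\<in>?D. card (T \<inter> C))"
  proof (rule card_UN_disjoint)
    show "finite ?D"
      using H(2,3) finite_subset by blast
    show "\<forall>C\<in>?D. finite (T \<inter> C)"
      using H(2,3) finite_subset by blast
    have "?D \<subseteq> rcosets K"
      using H(3) rcosetsI[OF subgroup.subset[OF K]] by blast
    then show "\<forall>C\<in>?D. \<forall>C'\<in>?D. C \<noteq> C' \<longrightarrow> T \<inter> C \<inter> (T \<inter> C') = {}"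
      using rcos_disjoint[OF K] unfolding pairwise_def disjnt_def by blast
  qed
  also have "\<dots> = (\<Sum>C\<in>?D. card (T \<inter> (K #> t)))"
  proof (rule sum.cong)
    fix C assume "C \<in> ?D"
    then show "card (T \<inter> C) = card (T \<inter> (K #> t))"
      using card_Int_rcos_eq_on_basic_set[OF assms(1-3) _ assms(4)] by blast
  qed simp
  finally show ?thesis
    by simp
qed

lemma dvd_prime_power_le_prime:
  fixes p d :: nat
  assumes "Factorial_Ring.prime p" "d dvd p ^ k" "d \<le> p"
  shows "d = 1 \<or> d = p"
proof -
  obtain i where d: "d = p ^ i"
    using assms(1,2) divides_primepow_nat by blast
  then have "i \<le> 1"
    using assms(1,3) power_le_imp_le_exp[of p i 1] prime_gt_1_nat by simp
  then show ?thesis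
    using d by (cases i) auto
qed

lemma conv_ind_singleton:
  fixes H (structure)
  assumes "group H" "finite (carrier H)" "a \<in> carrier H" "T \<subseteq> carrier H"
  shows "conv H (ind {a}) (ind T) = ind (a <# T)"
proof
  interpret group H by fact
  fix x
  show "conv H (ind {a}) (ind T) x = ind (a <# T) x"
  proof (cases "x \<in> carrier H")
    case True
    have "inv a \<otimes> x \<in> T \<longleftrightarrow> x \<in> a <# T"
      using True assms(3,4) unfolding l_coset_def
      by (force simp: m_assoc [symmetric] inv_solve_left)
    then have "{y \<in> {a}. inv y \<otimes> x \<in> T} = (if x \<in> a <# T then {a} else {})"
      by auto
    then show ?thesis
      using conv_ind_ind[OF assms(2) _ True, of "{a}"] assms(3) by (simp add: ind_def)
  next
    case False
    then show ?thesis
      using l_coset_subset_G[OF assms(4,3)] by (auto simp: conv_def ind_def)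
  qed
qed

lemma l_coset_basic_set_in_S:
  fixes H (structure)
  assumes "S_ring H S" "{a} \<in> S" "T \<in> S"
  shows "a <# T \<in> S"
proof -
  have H: "group H" "finite (carrier H)" "\<Union>S = carrier H" "\<forall>U\<in>S. U \<noteq> {} \<and> U \<subseteq> carrier H"
    "\<forall>U\<in>S. (\<lambda>x. inv x) ` U \<in> S" "\<forall>U\<in>S. \<forall>V\<in>S. in_span S (conv H (ind U) (ind V))"
    using assms(1) unfolding S_ring_def by auto
  interpret group H by fact
  have a: "a \<in> carrier H" "{inv a} \<in> S"
    using H(4,5) assms(2) by force+
  have span: "in_span S (ind (b <# U))" if "{b} \<in> S" "U \<in> S" for b U
  proof -
    have "b \<in> carrier H" "U \<subseteq> carrier H"
      using H(4) that by auto
    then show ?thesis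
      using H(6) that conv_ind_singleton[OF H(1,2)] by metis
  qed
  obtain y where y: "y \<in> T"
    using H(4) assms(3) by blast
  then have yc: "y \<in> carrier H"
    using H(4) assms(3) by blast
  then obtain U where U: "U \<in> S" "a \<otimes> y \<in> U"
    using H(3) a(1) by blast
  have "a \<otimes> y \<in> a <# T"
    using y unfolding l_coset_def by blast
  then have U_sub: "U \<subseteq> a <# T"
    using in_span_ind_basic_set_subset[OF assms(1) span[OF assms(2,3)] U(1)] U(2) by blast
  have "inv a \<otimes> (a \<otimes> y) = y"
    using yc a(1) by (simp add: m_assoc [symmetric])
  then have "y \<in> inv a <# U"
    using U(2) unfolding l_coset_def by force
  then have "T \<subseteq> inv a <# U"
    using in_span_ind_basic_set_subset[OF assms(1) span[OF a(2) U(1)] assms(3)] y by blast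
  then have "a <# T \<subseteq> a <# (inv a <# U)"
    unfolding l_coset_def by blast
  also have "a <# (inv a <# U) = U"
    using H(4) U(1) a(1) by (simp add: lcos_m_assoc lcos_mult_one)
  finally show ?thesis
    using U_sub U(1) by (metis subset_antisym)
qed

lemma basic_set_subset_rcos:
  fixes H (structure)
  assumes "S_ring H S" "Factorial_Ring.prime p" "card T = p ^ k" "T \<in> S"
    and "A_subgroup H S K" "card (rcosets K) = p"
  shows "\<exists>g\<in>T. T \<subseteq> K #> g"
proof -
  have H: "group H" "finite (carrier H)" "T \<noteq> {}" "T \<subseteq> carrier H"
    using assms(1,4) unfolding S_ring_def by auto
  interpret group H by fact
  have K: "subgroup K H" "in_span S (ind K)"
    using assms(5) unfolding A_subgroup_def by auto
  obtain t where t: "t \<in> T"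
    using H(3) by blast
  let ?D = "(\<lambda>x. K #> x) ` T"
  have D_sub: "?D \<subseteq> rcosets K"
    using H(4) rcosetsI[OF subgroup.subset[OF K(1)]] by blast
  have fin: "finite (rcosets K)"
    using H(2) unfolding RCOSETS_def by simp
  have "card ?D dvd p ^ k"
    using card_basic_set_eq_mult_card_rcos_image[OF assms(1,5,4) t] assms(3) by (metis dvd_triv_right)
  moreover have "card ?D \<le> p"
    using card_mono[OF fin D_sub] assms(6) by simp
  ultimately have "card ?D = 1 \<or> card ?D = p"
    using dvd_prime_power_le_prime[OF assms(2)] by blast
  moreover have "card ?D \<noteq> p"
  proof
    assume "card ?D = p"
    then have "?D = rcosets K"
      using card_subset_eq[OF fin D_sub] assms(6) by simp
    then obtain x where "x \<in> T" "K #> x = K"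
      using subgroup.subgroup_in_rcosets[OF K(1) is_group] by (metis imageE)
    then have "T \<inter> K \<noteq> {}"
      using coset_join1[OF _ _ K(1)] H(4) by blast
    then have "T \<subseteq> K"
      using in_span_ind_basic_set_subset[OF assms(1) K(2) assms(4)] by blast
    then have "K #> x = K" if "x \<in> T" for x
      using that H(4) coset_join2[OF _ K(1)] by blast
    then have "?D = {K}"
      using t by auto
    then show False
      using \<open>card ?D = p\<close> prime_gt_1_nat[OF assms(2)] by simp
  qed
  ultimately obtain C where "?D = {C}"
    by (metis card_1_singletonE)
  then have "K #> x = K #> t" if "x \<in> T" for x
    using that t by blast
  then have "T \<subseteq> K #> t"
    using H(4) rcos_self[OF _ K(1)] by blast
  then show ?thesis
    using t by blast
qed

lemma rad_subset_if_subset_rcos: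
  fixes H (structure)
  assumes "group H" "subgroup K H" "g \<in> carrier H" "g \<in> T" "T \<subseteq> K #> g"
  shows "rad H T \<subseteq> K"
proof
  interpret group H by fact
  fix h assume "h \<in> rad H T"
  then have h: "h \<in> carrier H" "h <# T = T"
    unfolding rad_def by auto
  have "h \<otimes> g \<in> K #> g"
    using assms(4,5) h(2) unfolding l_coset_def by blast
  then have "(h \<otimes> g) \<otimes> inv g \<in> K"
    using subgroup.rcos_module_imp[OF assms(2) is_group assms(3)] by blast
  then show "h \<in> K"
    using h(1) assms(3) by (simp add: m_assoc)
qed

lemma subset_rad_if_rcos_subset:
  fixes H (structure)
  assumes "normal L H" "T \<subseteq> carrier H" "\<And>x. x \<in> T \<Longrightarrow> L #> x \<subseteq> T"
  shows "L \<subseteq> rad H T"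
proof
  interpret normal L H by fact
  have left: "m <# T \<subseteq> T" if "m \<in> L" for m
    using that assms(2,3) rcosI[OF _ subset] unfolding l_coset_def by blast
  have right: "T #> m \<subseteq> T" if "m \<in> L" for m
  proof
    fix y assume "y \<in> T #> m"
    then obtain t where "t \<in> T" "y = t \<otimes> m"
      unfolding r_coset_def by blast
    then have "y \<in> L #> t"
      using that assms(2) coset_eq unfolding l_coset_def by blast
    then show "y \<in> T"
      using \<open>t \<in> T\<close> assms(3) by blast
  qed
  fix l assume l: "l \<in> L"
  then have lc: "l \<in> carrier H" "inv l \<in> L" "inv l \<in> carrier H"
    by auto
  have "T = l <# (inv l <# T)"
    using assms(2) lc by (simp add: lcos_m_assoc lcos_mult_one)
  also have "\<dots> \<subseteq> l <# T"
    using left[OF lc(2)] unfolding l_coset_def by blast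
  finally have "l <# T = T"
    using left[OF l] by blast
  moreover have "T = (T #> inv l) #> l"
    using assms(2) lc by (simp add: coset_mult_assoc)
  then have "T \<subseteq> T #> l"
    using right[OF lc(2)] unfolding r_coset_def by blast
  then have "T #> l = T"
    using right[OF l] by blast
  ultimately show "l \<in> rad H T"
    unfolding rad_def using lc(1) by blast
qed

lemma basic_set_Int_rcos_eq_singleton:
  fixes H (structure)
  assumes "S_ring H S" "Factorial_Ring.prime p" "card T = p ^ k" "T \<in> S"
    and "A_subgroup H S L" "card L = p" "normal L H" "\<not> L \<subseteq> rad H T" "h \<in> T"
  shows "T \<inter> (L #> h) = {h}"
proof -
  have H: "group H" "finite (carrier H)" "T \<subseteq> carrier H"
    using assms(1,4) unfolding S_ring_def by auto
  interpret group H by fact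
  have L: "subgroup L H" "L \<subseteq> carrier H"
    using assms(5) subgroup.subset unfolding A_subgroup_def by auto
  have rcos: "finite (L #> x)" "card (L #> x) = p" if "x \<in> carrier H" for x
    using finite_subset[OF r_coset_subset_G[OF L(2) that] H(2)]
      card_rcosets_equal[OF rcosetsI[OF L(2) that] L(2)] assms(6) by auto
  define c where "c = card (T \<inter> (L #> h))"
  have const: "card (T \<inter> (L #> x)) = c" if "x \<in> T" for x
    unfolding c_def using card_Int_rcos_eq_on_basic_set[OF assms(1,5,4) that assms(9)] .
  have "c dvd p ^ k"
    unfolding c_def using card_basic_set_eq_mult_card_rcos_image[OF assms(1,5,4,9)] assms(3)
    by (metis dvd_triv_left)
  moreover have "c \<le> p"
    unfolding c_def using assms(9) H(3) rcos card_mono by (metis Int_lower2 subsetD)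
  ultimately have "c = 1 \<or> c = p"
    using dvd_prime_power_le_prime[OF assms(2)] by blast
  moreover have "c \<noteq> p"
  proof
    assume "c = p"
    have "L #> x \<subseteq> T" if "x \<in> T" for x
      using card_subset_eq[OF rcos(1) Int_lower2, of x T] const[OF that] \<open>c = p\<close> rcos(2) that H(3)
      by auto
    then have "L \<subseteq> rad H T"
      using subset_rad_if_rcos_subset[OF assms(7) H(3)] by blast
    then show False
      using assms(8) by blast
  qed
  ultimately have "card (T \<inter> (L #> h)) = 1"
    unfolding c_def by blast
  moreover have "h \<in> T \<inter> (L #> h)"
    using assms(9) H(3) rcos_self[OF _ L(1)] by blast
  ultimately show ?thesis
    by (metis card_1_singletonE singletonD)
qed

lemma inj_on_l_coset_thin_radical:
  fixes H (structure) and T :: "'a set"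
  assumes "comm_group H" "S_ring H S" "T \<in> S" "thin_radical H S \<inter> rad H T = {\<one>}"
  shows "inj_on (\<lambda>a. a <# T) (thin_radical H S)"
proof
  interpret comm_group H by fact
  have T: "T \<subseteq> carrier H"
    using assms(2,3) unfolding S_ring_def by auto
  fix a b assume "a \<in> thin_radical H S" "b \<in> thin_radical H S" and eq: "a <# T = b <# T"
  then have a: "a \<in> carrier H" "{a} \<in> S" and b: "b \<in> carrier H" "{b} \<in> S"
    unfolding thin_radical_def by auto
  define d where "d = inv b \<otimes> a"
  have d: "d \<in> carrier H"
    unfolding d_def using a b by simp
  have "{inv b} \<in> S"
    using assms(2) b(2) unfolding S_ring_def by force
  then have "{d} \<in> S"
    using l_coset_basic_set_in_S[OF assms(2) _ a(2)] unfolding d_def l_coset_def by simp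
  moreover have "d <# T = T"
    using eq T a b unfolding d_def by (metis inv_closed l_inv lcos_m_assoc lcos_mult_one)
  moreover have "T #> d = d <# T"
    using d T unfolding l_coset_def r_coset_def by (auto simp: m_comm subsetD)
  ultimately have "d \<in> thin_radical H S \<inter> rad H T"
    unfolding thin_radical_def rad_def using d by simp
  then have "b \<otimes> d = b"
    using assms(4) b by simp
  then show "a = b"
    unfolding d_def using a b by (simp add: m_assoc [symmetric])
qed

lemma card_thin_radical_Int_mult_card_le:
  fixes H (structure)
  assumes "comm_group H" "S_ring H S" "subgroup K H" "T \<in> S" "g \<in> carrier H" "T \<subseteq> K #> g"
    and "thin_radical H S \<inter> rad H T = {\<one>}"
  shows "card (thin_radical H S \<inter> K) * card T \<le> card K"
proof -
  have H: "finite (carrier H)" "T \<subseteq> carrier H" "\<forall>U\<in>S. \<forall>V\<in>S. U \<noteq> V \<longrightarrow> U \<inter> V = {}"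
    using assms(2,4) unfolding S_ring_def by auto
  interpret comm_group H by fact
  let ?O = "thin_radical H S \<inter> K"
  have O: "a \<in> carrier H" "a <# T \<in> S" if "a \<in> ?O" for a
    using that l_coset_basic_set_in_S[OF assms(2) _ assms(4)] unfolding thin_radical_def by auto
  have inj: "inj_on (\<lambda>a. a <# T) ?O"
    using inj_on_l_coset_thin_radical[OF assms(1,2,4,7)] by (rule inj_on_subset) blast
  have "card (a <# T) = card T" if "a \<in> ?O" for a
    using l_card_cosets_equal[of "a <# T" T] O(1)[OF that] H(1,2) unfolding LCOSETS_def by force
  then have "card ?O * card T = (\<Sum>a\<in>?O. card (a <# T))"
    by simp
  also have "\<dots> = card (\<Union>a\<in>?O. a <# T)"
  proof (rule card_UN_disjoint [symmetric])
    show "finite ?O"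
      using H(1) unfolding thin_radical_def by (auto intro: finite_subset)
    show "\<forall>a\<in>?O. finite (a <# T)"
      using finite_subset[OF l_coset_subset_G[OF H(2) O(1)] H(1)] by blast
    show "\<forall>a\<in>?O. \<forall>b\<in>?O. a \<noteq> b \<longrightarrow> (a <# T) \<inter> (b <# T) = {}"
    proof (intro ballI impI)
      fix a b assume "a \<in> ?O" "b \<in> ?O" "a \<noteq> b"
      then have "a <# T \<noteq> b <# T"
        using inj by (auto dest: inj_onD)
      then show "(a <# T) \<inter> (b <# T) = {}"
        using H(3) O(2) \<open>a \<in> ?O\<close> \<open>b \<in> ?O\<close> by blast
    qed
  qed
  also have "\<dots> \<le> card (K #> g)"
  proof (rule card_mono)
    show "finite (K #> g)"
      using finite_subset[OF r_coset_subset_G[OF subgroup.subset[OF assms(3)] assms(5)] H(1)] .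
    show "(\<Union>a\<in>?O. a <# T) \<subseteq> K #> g"
    proof (intro UN_least subsetI)
      fix a y assume "a \<in> ?O" "y \<in> a <# T"
      then obtain k where k: "k \<in> K" "y = a \<otimes> (k \<otimes> g)"
        using assms(6) unfolding l_coset_def r_coset_def by blast
      moreover have "a \<in> K" "a \<in> carrier H" "k \<in> carrier H"
        using \<open>a \<in> ?O\<close> O(1) k(1) subgroup.mem_carrier[OF assms(3)] by auto
      ultimately have "y = (a \<otimes> k) \<otimes> g" "a \<otimes> k \<in> K"
        using assms(5) subgroup.m_closed[OF assms(3)] by (auto simp: m_assoc)
      then show "y \<in> K #> g"
        unfolding r_coset_def by blast
    qed
  qed
  also have "\<dots> = card K"
    using card_rcosets_equal[OF rcosetsI] assms(3,5) subgroup.subset by metis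
  finally show ?thesis .
qed

theorem lemma2p18:
  fixes H :: "('a, 'b) monoid_scheme" and S :: "'a set set" and p :: nat
    and K T :: "'a set"
  assumes "p_S_ring H S p"
    and "A_subgroup H S K"
    and "card (carrier H) = p * card K"
    and "T \<in> S"
  shows "((\<exists>g\<in>carrier H. T \<subseteq> K #>\<^bsub>H\<^esub> g) \<and> rad H T \<subseteq> K) \<and>
         (\<forall>L. A_subgroup H S L \<and> card L = p \<and> normal L H \<and> \<not> L \<subseteq> rad H T \<longrightarrow>
            (\<forall>h\<in>T. (h <#\<^bsub>H\<^esub> L) \<inter> T = {h} \<and> (L #>\<^bsub>H\<^esub> h) \<inter> T = {h})) \<and>
         (comm_group H \<and>
            card (thin_radical H S \<inter> K) * card T > card (carrier H) div p \<longrightarrow>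
            thin_radical H S \<inter> rad H T \<noteq> {\<one>\<^bsub>H\<^esub>})"
proof -
  obtain k where S: "S_ring H S" "Factorial_Ring.prime p" "card T = p ^ k"
    using assms(1,4) unfolding p_S_ring_def by blast
  have H: "group H" "finite (carrier H)" "T \<subseteq> carrier H"
    using S(1) assms(4) unfolding S_ring_def by auto
  have "0 < card (carrier H)"
    using H(2) monoid.one_closed[OF group.is_monoid[OF H(1)]] card_gt_0_iff by blast
  then have K: "subgroup K H" "0 < card K"
    using assms(2,3) unfolding A_subgroup_def by auto
  have "card (rcosets\<^bsub>H\<^esub> K) = p"
    using group.lagrange[OF H(1) K(1)] K(2) assms(3) unfolding order_def by simp
  then obtain g where g: "g \<in> T" "T \<subseteq> K #>\<^bsub>H\<^esub> g"
    using basic_set_subset_rcos[OF S assms(4,2)] by blast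
  have "rad H T \<subseteq> K"
    using rad_subset_if_subset_rcos[OF H(1) K(1) _ g] g(1) H(3) by blast
  moreover have "(h <#\<^bsub>H\<^esub> L) \<inter> T = {h} \<and> (L #>\<^bsub>H\<^esub> h) \<inter> T = {h}"
    if "A_subgroup H S L" "card L = p" "normal L H" "\<not> L \<subseteq> rad H T" "h \<in> T" for L h
    using basic_set_Int_rcos_eq_singleton[OF S assms(4) that] normal.coset_eq[OF that(3)] that(5) H(3)
    by blast
  moreover have "card (thin_radical H S \<inter> K) * card T \<le> card (carrier H) div p"
    if "comm_group H" "thin_radical H S \<inter> rad H T = {\<one>\<^bsub>H\<^esub>}"
    using card_thin_radical_Int_mult_card_le[OF that(1) S(1) K(1) assms(4) _ g(2) that(2)]
      g(1) H(3) assms(3) S(2) prime_gt_0_nat by auto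
  moreover have "\<exists>g\<in>carrier H. T \<subseteq> K #>\<^bsub>H\<^esub> g"
    using g H(3) by blast
  ultimately show ?thesis
    by (auto simp: not_less [symmetric])
qed

end
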